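(* Equip $\mathfrak g$ with the quadratic bracket ${\rm PB}_2({\rm A}_1,{\rm A}_2,{\rm S})$. Let $\varphi$ be an Ad-invariant function on $\mathfrak g$ and $\psi(T)=\varphi(T\mathcal F^{-1})=\varphi(\mathcal F^{-1}T)$. Then the Hamiltonian equations of motion of $\psi$ read $\dot T=T\mathcal C_2-\mathcal C_1T$ with $\mathcal C_1=\frac12\mathcal F\,{\rm R}\big(\mathcal F^{-1}d\varphi(T\mathcal F^{-1})\big)$, $\mathcal C_2=\frac12{\rm R}\big(d\varphi(\mathcal F^{-1}T)\mathcal F^{-1}\big)\mathcal F$, where $d\varphi(Y)=Y\nabla\varphi(Y)$.
   Context: Periodic lattice setting: $N\ge2$; $\mathfrak g=\{X(\lambda)\in gl(N)[\lambda,\lambda^{-1}]:\Omega X(\lambda)\Omega^{-1}=X(\omega\lambda)\}$, $\omega=e^{2\pi i/N}$, $\Omega=\mathrm{diag}(1,\omega,\dots,\omega^{N-1})$, matrix indices modulo $N$; $\langle X,Y\rangle$ = coefficient of $\lambda^0$ in $\mathrm{tr}(XY)$. $\mathfrak g_p=\{\lambda^p\sum_{j-k\equiv p}x_{jk}E_{jk}\}$; $P_0,P_{>0},P_{\ge0},P_{<0}$ projections onto $\mathfrak g_0$, $\oplus_{p>0}\mathfrak g_p$, $\oplus_{p\ge0}\mathfrak g_p$, $\oplus_{p<0}\mathfrak g_p$; ${\rm R}=P_{\ge0}-P_{<0}$, ${\rm R}_0=P_{>0}-P_{<0}$; $W$ linear, $W=W\circ P_0$, $W(E_{kk})=\sum_j\mathrm{sgn}(k-j)E_{jj}$;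 ${\rm A}_1={\rm R}_0+W$, ${\rm A}_2={\rm R}_0-W$, ${\rm S}=P_0-W$, ${\rm S}^*=P_0+W$. Gradient: $\langle\nabla\varphi(L),M\rangle=\frac{d}{d\varepsilon}\varphi(L+\varepsilon M)|_{\varepsilon=0}$; $d\varphi(L)=L\nabla\varphi(L)$, $d'\varphi(L)=\nabla\varphi(L)L$; Ad-invariant: $[\nabla\varphi(L),L]=0$ for all $L$. ${\rm PB}_2({\rm A}_1,{\rm A}_2,{\rm S})$: $\{\varphi,\psi\}_2=\frac12\langle{\rm A}_1(d'\varphi),d'\psi\rangle-\frac12\langle{\rm A}_2(d\varphi),d\psi\rangle+\frac12\langle{\rm S}(d\varphi),d'\psi\rangle-\frac12\langle{\rm S}^*(d'\varphi),d\psi\rangle$. $\alpha$ real, $\mathcal F=I-\alpha\lambda\sum_kE_{k+1,k}$, $\mathcal F^{-1}$ a formal power series in $\lambda$. Hamiltonian flow of $H$: $\frac{d}{dt}f=\{H,f\}$. *)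

theory Defs
  imports Complex_Main
begin

text \<open>Twisted loop algebra over gl(N), completed to formal Laurent series in lambda
  that are bounded below.  A series is a coefficient function
  X p j k = entry (j,k) of the coefficient of lambda^p (indices j,k in {0..<N}).\<close>

type_synonym ser = "int \<Rightarrow> nat \<Rightarrow> nat \<Rightarrow> complex"

definition inS :: "nat \<Rightarrow> ser \<Rightarrow> bool" where
  "inS N X \<longleftrightarrow>
     (\<forall>p j k. X p j k \<noteq> 0 \<longrightarrow> j < N \<and> k < N \<and> int N dvd (int j - int k - p)) \<and>
     (\<exists>c. \<forall>p<c. \<forall>j k. X p j k = 0)"

text \<open>The loop algebra g itself: Laurent polynomials (finite support).\<close>
definition inG :: "nat \<Rightarrow> ser \<Rightarrow> bool" where
  "inG N X \<longleftrightarrow> inS N X \<and> (\<exists>d. \<forall>p>d. \<forall>j k. X p j k = 0)"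

definition lb :: "ser \<Rightarrow> int" where
  "lb X = (SOME c. \<forall>p<c. \<forall>j k. X p j k = 0)"

definition sadd :: "ser \<Rightarrow> ser \<Rightarrow> ser" where
  "sadd X Y = (\<lambda>p j k. X p j k + Y p j k)"

definition sdiff :: "ser \<Rightarrow> ser \<Rightarrow> ser" where
  "sdiff X Y = (\<lambda>p j k. X p j k - Y p j k)"

definition sscale :: "complex \<Rightarrow> ser \<Rightarrow> ser" where
  "sscale c X = (\<lambda>p j k. c * X p j k)"

definition smult :: "nat \<Rightarrow> ser \<Rightarrow> ser \<Rightarrow> ser" where
  "smult N X Y = (\<lambda>p j k. \<Sum>q\<in>{lb X..p - lb Y}. \<Sum>l<N. X q j l * Y (p - q) l k)"

definition sone :: "nat \<Rightarrow> ser" where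
  "sone N = (\<lambda>p j k. if p = 0 \<and> j = k \<and> j < N then 1 else 0)"

definition spair :: "nat \<Rightarrow> ser \<Rightarrow> ser \<Rightarrow> complex" where
  "spair N X Y = (\<Sum>j<N. smult N X Y 0 j j)"

definition P0 :: "ser \<Rightarrow> ser" where
  "P0 X = (\<lambda>p j k. if p = 0 then X p j k else 0)"
definition Pgt0 :: "ser \<Rightarrow> ser" where
  "Pgt0 X = (\<lambda>p j k. if p > 0 then X p j k else 0)"
definition Pge0 :: "ser \<Rightarrow> ser" where
  "Pge0 X = (\<lambda>p j k. if p \<ge> 0 then X p j k else 0)"
definition Plt0 :: "ser \<Rightarrow> ser" where
  "Plt0 X = (\<lambda>p j k. if p < 0 then X p j k else 0)"

definition Rop :: "ser \<Rightarrow> ser" where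
  "Rop X = sdiff (Pge0 X) (Plt0 X)"
definition R0op :: "ser \<Rightarrow> ser" where
  "R0op X = sdiff (Pgt0 X) (Plt0 X)"

text \<open>W = W o P0, W(E_kk) = sum_j sgn(k - j) E_jj.\<close>
definition Wop :: "nat \<Rightarrow> ser \<Rightarrow> ser" where
  "Wop N X = (\<lambda>p j k. if p = 0 \<and> j = k \<and> j < N
      then (\<Sum>i<N. of_int (sgn (int i - int j)) * X 0 i i) else 0)"

definition A1op :: "nat \<Rightarrow> ser \<Rightarrow> ser" where "A1op N X = sadd (R0op X) (Wop N X)"
definition A2op :: "nat \<Rightarrow> ser \<Rightarrow> ser" where "A2op N X = sdiff (R0op X) (Wop N X)"
definition Sop :: "nat \<Rightarrow> ser \<Rightarrow> ser" where "Sop N X = sdiff (P0 X) (Wop N X)"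
definition Sstar :: "nat \<Rightarrow> ser \<Rightarrow> ser" where "Sstar N X = sadd (P0 X) (Wop N X)"

definition Fmat :: "nat \<Rightarrow> real \<Rightarrow> ser" where
  "Fmat N \<alpha> = (\<lambda>p j k. (if p = 0 \<and> j = k \<and> j < N then 1 else 0)
       - (if p = 1 \<and> k < N \<and> j = (k + 1) mod N then complex_of_real \<alpha> else 0))"

definition Finv :: "nat \<Rightarrow> real \<Rightarrow> ser" where
  "Finv N \<alpha> = (THE Y. inS N Y \<and> smult N (Fmat N \<alpha>) Y = sone N \<and> smult N Y (Fmat N \<alpha>) = sone N)"

definition is_grad :: "nat \<Rightarrow> (ser \<Rightarrow> bool) \<Rightarrow> (ser \<Rightarrow> complex) \<Rightarrow> ser \<Rightarrow> ser \<Rightarrow> bool" where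
  "is_grad N D f L G \<longleftrightarrow> inS N G \<and>
     (\<forall>M. D M \<longrightarrow> ((\<lambda>e::real. f (sadd L (sscale (complex_of_real e) M)))
                      has_vector_derivative spair N G M) (at 0))"

definition grad :: "nat \<Rightarrow> (ser \<Rightarrow> bool) \<Rightarrow> (ser \<Rightarrow> complex) \<Rightarrow> ser \<Rightarrow> ser" where
  "grad N D f L = (SOME G. is_grad N D f L G)"

definition PB2 :: "nat \<Rightarrow> (ser \<Rightarrow> complex) \<Rightarrow> (ser \<Rightarrow> complex) \<Rightarrow> ser \<Rightarrow> complex" where
  "PB2 N f h L =
     (let X = grad N (inG N) f L; Y = grad N (inG N) h L;
          dX = smult N L X; d'X = smult N X L;
          dY = smult N L Y; d'Y = smult N Y L
      in (1/2) * spair N (A1op N d'X) d'Y - (1/2) * spair N (A2op N dX) dY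
         + (1/2) * spair N (Sop N dX) d'Y - (1/2) * spair N (Sstar N d'X) dY)"

end

theory Submission
  imports Defs "HOL-Analysis.Derivative"
begin

text \<open>Put \<open>U = T\<F>\<^sup>-\<^sup>1\<close> and \<open>V = \<F>\<^sup>-\<^sup>1T\<close>. Since \<open>\<psi>(T) = \<phi>(U) = \<phi>(V)\<close>, the gradient
  of \<open>\<psi>\<close> at \<open>T\<close> is both \<open>\<F>\<^sup>-\<^sup>1\<nabla>\<phi>(U)\<close> and \<open>\<nabla>\<phi>(V)\<F>\<^sup>-\<^sup>1\<close>. With
  \<open>E = \<F>\<^sup>-\<^sup>1T\<nabla>\<phi>(V)\<F>\<^sup>-\<^sup>1\<close> this gives \<open>d\<psi> = \<F>E\<close> and, by Ad-invariance of \<open>\<phi>\<close> at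
  \<open>V\<close>, \<open>d'\<psi> = E\<F>\<close>; moreover \<open>\<F>\<^sup>-\<^sup>1d\<phi>(U) = d\<phi>(V)\<F>\<^sup>-\<^sup>1 = E\<close>.
  By cyclicity of the pairing the bracket only involves
  \<open>A\<^sub>1(E\<F>) + S(\<F>E)\<close> and \<open>A\<^sub>2(\<F>E) + S\<^sup>*(E\<F>)\<close>. A direct computation shows that these
  equal \<open>R(E)\<F> + c\<close> and \<open>\<F>R(E) + c\<close> for one and the same scalar \<open>c\<close>: away from degree 0
  the projections commute with \<open>\<F>\<close>, and in degree 0 the \<open>W\<close>-terms telescope around the
  cycle of indices. The scalar cancels in \<open>T(\<dots>) - (\<dots>)T\<close>, leaving \<open>T\<C>\<^sub>2 - \<C>\<^sub>1T\<close>.\<close>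

section \<open>Twisted series bounded below\<close>

definition vanishes_below :: "ser \<Rightarrow> int \<Rightarrow> bool" where
  "vanishes_below X a \<longleftrightarrow> (\<forall>p<a. \<forall>j k. X p j k = 0)"

definition twisted :: "nat \<Rightarrow> ser \<Rightarrow> bool" where
  "twisted N X \<longleftrightarrow>
     (\<forall>p j k. X p j k \<noteq> 0 \<longrightarrow> j < N \<and> k < N \<and> int N dvd (int j - int k - p))"

lemma inS_iff: "inS N X \<longleftrightarrow> twisted N X \<and> (\<exists>a. vanishes_below X a)"
  unfolding inS_def twisted_def vanishes_below_def by blast

lemma vanishes_belowD: "vanishes_below X a \<Longrightarrow> p < a \<Longrightarrow> X p j k = 0"
  unfolding vanishes_below_def by blast

lemma vanishes_below_lb: "\<exists>a. vanishes_below X a \<Longrightarrow> vanishes_below X (lb X)"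
  unfolding lb_def vanishes_below_def by (rule someI_ex)

lemma vanishes_below_mono: "vanishes_below X a \<Longrightarrow> b \<le> a \<Longrightarrow> vanishes_below X b"
  unfolding vanishes_below_def by auto

lemma inS_vanishes_below: "inS N X \<Longrightarrow> \<exists>a. vanishes_below X a"
  by (simp add: inS_iff)

lemma inS_common_bound:
  assumes "inS N X" "inS N Y"
  obtains a where "vanishes_below X a" "vanishes_below Y a"
proof -
  obtain a b where "vanishes_below X a" "vanishes_below Y b" using assms inS_iff by blast
  then show ?thesis
    using that[of "min a b"] vanishes_below_mono by (metis min.cobounded1 min.cobounded2)
qed

lemma inS_entry_eq_0: "inS N X \<Longrightarrow> \<not> (j < N \<and> k < N) \<Longrightarrow> X p j k = 0"
  unfolding inS_iff twisted_def by blast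

lemma inS_entry_dvd: "inS N X \<Longrightarrow> X p j k \<noteq> 0 \<Longrightarrow> int N dvd (int j - int k - p)"
  unfolding inS_def by blast

lemma inG_inS: "inG N X \<Longrightarrow> inS N X"
  by (simp add: inG_def)

section \<open>The product of series\<close>

lemma smult_eq_sum:
  assumes "\<exists>a. vanishes_below X a" "\<exists>b. vanishes_below Y b" "finite I"
    and "\<And>q l. l < N \<Longrightarrow> X q j l * Y (p - q) l k \<noteq> 0 \<Longrightarrow> q \<in> I"
  shows "smult N X Y p j k = (\<Sum>q\<in>I. \<Sum>l<N. X q j l * Y (p - q) l k)"
proof -
  define g where "g q = (\<Sum>l<N. X q j l * Y (p - q) l k)" for q
  define J where "J = {lb X..p - lb Y}"
  have X: "vanishes_below X (lb X)" and Y: "vanishes_below Y (lb Y)"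
    using assms(1,2) by (auto intro: vanishes_below_lb)
  have "smult N X Y p j k = sum g J" unfolding smult_def g_def J_def by simp
  also have "\<dots> = sum g (I \<inter> J)"
  proof (rule sum.mono_neutral_right)
    show "\<forall>q\<in>J - I \<inter> J. g q = 0" unfolding g_def using assms(4) by (auto intro!: sum.neutral)
  qed (auto simp: J_def)
  also have "\<dots> = sum g I"
  proof (rule sum.mono_neutral_left)
    show "\<forall>q\<in>I - I \<inter> J. g q = 0"
    proof
      fix q assume "q \<in> I - I \<inter> J"
      then have "q < lb X \<or> p - q < lb Y" by (auto simp: J_def)
      then show "g q = 0"
        unfolding g_def using vanishes_belowD[OF X] vanishes_belowD[OF Y] by auto
    qed
  qed (use assms(3) in auto)
  finally show ?thesis unfolding g_def .
qed

lemma smult_eq_sum_superset: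
  assumes "vanishes_below X a" "vanishes_below Y b" "finite I" "{a..p - b} \<subseteq> I"
  shows "smult N X Y p j k = (\<Sum>q\<in>I. \<Sum>l<N. X q j l * Y (p - q) l k)"
proof (rule smult_eq_sum)
  fix q l assume "X q j l * Y (p - q) l k \<noteq> 0"
  then have "\<not> q < a" "\<not> p - q < b"
    using vanishes_belowD[OF assms(1)] vanishes_belowD[OF assms(2)] by force+
  then show "q \<in> I" using assms(4) by auto
qed (use assms in auto)

lemma vanishes_below_smult:
  assumes "vanishes_below X a" "vanishes_below Y b"
  shows "vanishes_below (smult N X Y) (a + b)"
  unfolding vanishes_below_def
  using smult_eq_sum_superset[OF assms, where I = "{}"] by auto

lemma twisted_smult:
  assumes "twisted N X" "twisted N Y"
  shows "twisted N (smult N X Y)"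
  unfolding twisted_def
proof (intro allI impI)
  fix p j k assume "smult N X Y p j k \<noteq> 0"
  then obtain q l where "l < N" "X q j l \<noteq> 0" "Y (p - q) l k \<noteq> 0"
    unfolding smult_def by (auto elim!: sum.not_neutral_contains_not_neutral)
  then have 1: "j < N \<and> l < N \<and> int N dvd (int j - int l - q)"
    and 2: "l < N \<and> k < N \<and> int N dvd (int l - int k - (p - q))"
    using assms unfolding twisted_def by blast+
  then have "int N dvd (int j - int l - q) + (int l - int k - (p - q))"
    by (intro dvd_add) auto
  also have "\<dots> = int j - int k - p" by simp
  finally show "j < N \<and> k < N \<and> int N dvd (int j - int k - p)" using 1 2 by auto
qed

lemma inS_smult: "inS N X \<Longrightarrow> inS N Y \<Longrightarrow> inS N (smult N X Y)"
  unfolding inS_iff using twisted_smult vanishes_below_smult by blast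

lemma smult_assoc:
  assumes "inS N X" "inS N Y" "inS N Z"
  shows "smult N (smult N X Y) Z = smult N X (smult N Y Z)"
proof (intro ext)
  fix p j k
  obtain a b c where a: "vanishes_below X a" and b: "vanishes_below Y b"
    and c: "vanishes_below Z c"
    using assms inS_vanishes_below by metis
  define Q where "Q = {a + b..p - c}"
  define J where "J = {a..p - b - c}"
  have XY_Z: "smult N (smult N X Y) Z p j k
      = (\<Sum>q\<in>Q. \<Sum>l<N. smult N X Y q j l * Z (p - q) l k)"
    by (rule smult_eq_sum_superset[OF vanishes_below_smult[OF a b] c]) (auto simp: Q_def)
  have XY: "smult N X Y q j l = (\<Sum>r\<in>J. \<Sum>m<N. X r j m * Y (q - r) m l)" if "q \<in> Q" for q l
    by (rule smult_eq_sum_superset[OF a b]) (use that in \<open>auto simp: Q_def J_def\<close>)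
  have X_YZ: "smult N X (smult N Y Z) p j k
      = (\<Sum>r\<in>J. \<Sum>m<N. X r j m * smult N Y Z (p - r) m k)"
    by (rule smult_eq_sum_superset[OF a vanishes_below_smult[OF b c]]) (auto simp: J_def)
  have YZ: "smult N Y Z (p - r) m k = (\<Sum>q\<in>Q. \<Sum>l<N. Y (q - r) m l * Z (p - q) l k)"
    if r: "r \<in> J" for r m
  proof -
    have "{b..p - r - c} \<subseteq> (\<lambda>q. q - r) ` Q"
    proof
      fix s assume "s \<in> {b..p - r - c}"
      then have "s + r \<in> Q" using r by (auto simp: Q_def J_def)
      then show "s \<in> (\<lambda>q. q - r) ` Q" by (intro image_eqI[of _ _ "s + r"]) auto
    qed
    then have "smult N Y Z (p - r) m k
        = (\<Sum>s\<in>(\<lambda>q. q - r) ` Q. \<Sum>l<N. Y s m l * Z (p - r - s) l k)"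
      by (intro smult_eq_sum_superset[OF b c]) (auto simp: Q_def)
    also have "\<dots> = (\<Sum>q\<in>Q. \<Sum>l<N. Y (q - r) m l * Z (p - q) l k)"
      by (subst sum.reindex) (auto simp: inj_on_def)
    finally show ?thesis .
  qed
  have "smult N (smult N X Y) Z p j k
      = (\<Sum>q\<in>Q. \<Sum>l<N. \<Sum>r\<in>J. \<Sum>m<N. X r j m * Y (q - r) m l * Z (p - q) l k)"
    by (simp add: XY_Z XY sum_distrib_right)
  also have "\<dots> = (\<Sum>r\<in>J. \<Sum>m<N. \<Sum>q\<in>Q. \<Sum>l<N. X r j m * Y (q - r) m l * Z (p - q) l k)"
    by (subst sum.swap) (subst (2) sum.swap, subst (3) sum.swap, subst (4) sum.swap, simp)
  also have "\<dots> = smult N X (smult N Y Z) p j k"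
    by (simp add: X_YZ YZ sum_distrib_left mult.assoc)
  finally show "smult N (smult N X Y) Z p j k = smult N X (smult N Y Z) p j k" .
qed

lemma vanishes_below_lincomb:
  "vanishes_below X a \<Longrightarrow> vanishes_below Y a
    \<Longrightarrow> vanishes_below (\<lambda>p j k. u * X p j k + v * Y p j k) a"
  unfolding vanishes_below_def by auto

lemma inS_lincomb:
  assumes "inS N X" "inS N Y"
  shows "inS N (\<lambda>p j k. u * X p j k + v * Y p j k)"
proof -
  obtain a where "vanishes_below X a" "vanishes_below Y a" using inS_common_bound[OF assms] .
  moreover have "twisted N (\<lambda>p j k. u * X p j k + v * Y p j k)"
    using assms unfolding inS_iff twisted_def by (metis add.right_neutral mult_zero_right)
  ultimately show ?thesis using vanishes_below_lincomb inS_iff by blast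
qed

lemma smult_lincomb_left:
  assumes "inS N X" "inS N Y" "inS N Z"
  shows "smult N (\<lambda>p j k. u * X p j k + v * Y p j k) Z
       = (\<lambda>p j k. u * smult N X Z p j k + v * smult N Y Z p j k)"
proof (intro ext)
  fix p j k
  obtain a where X: "vanishes_below X a" and Y: "vanishes_below Y a"
    using inS_common_bound[OF assms(1,2)] .
  obtain c where Z: "vanishes_below Z c" using assms(3) inS_vanishes_below by blast
  note sum_Icc = smult_eq_sum_superset[OF _ Z, where I = "{a..p - c}", simplified]
  show "smult N (\<lambda>p j k. u * X p j k + v * Y p j k) Z p j k
      = u * smult N X Z p j k + v * smult N Y Z p j k"
    by (simp add: sum_Icc[OF vanishes_below_lincomb[OF X Y]] sum_Icc[OF X] sum_Icc[OF Y]
        sum_distrib_left sum.distrib algebra_simps)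
qed

lemma smult_lincomb_right:
  assumes "inS N X" "inS N Y" "inS N Z"
  shows "smult N X (\<lambda>p j k. u * Y p j k + v * Z p j k)
       = (\<lambda>p j k. u * smult N X Y p j k + v * smult N X Z p j k)"
proof (intro ext)
  fix p j k
  obtain c where Y: "vanishes_below Y c" and Z: "vanishes_below Z c"
    using inS_common_bound[OF assms(2,3)] .
  obtain a where X: "vanishes_below X a" using assms(1) inS_vanishes_below by blast
  note sum_Icc = smult_eq_sum_superset[OF X, where I = "{a..p - c}", simplified]
  show "smult N X (\<lambda>p j k. u * Y p j k + v * Z p j k) p j k
      = u * smult N X Y p j k + v * smult N X Z p j k"
    by (simp add: sum_Icc[OF vanishes_below_lincomb[OF Y Z]] sum_Icc[OF Y] sum_Icc[OF Z]
        sum_distrib_left sum.distrib algebra_simps)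
qed

lemma sadd_eq_lincomb: "sadd X Y = (\<lambda>p j k. 1 * X p j k + 1 * Y p j k)"
  by (simp add: sadd_def)

lemma sdiff_eq_lincomb: "sdiff X Y = (\<lambda>p j k. 1 * X p j k + (-1) * Y p j k)"
  by (simp add: sdiff_def)

lemma sscale_eq_lincomb: "sscale c X = (\<lambda>p j k. c * X p j k + 0 * X p j k)"
  by (simp add: sscale_def)

lemma smult_sadd_left:
  "inS N X \<Longrightarrow> inS N Y \<Longrightarrow> inS N Z \<Longrightarrow>
    smult N (sadd X Y) Z = sadd (smult N X Z) (smult N Y Z)"
  unfolding sadd_eq_lincomb by (rule smult_lincomb_left)

lemma smult_sadd_right:
  "inS N X \<Longrightarrow> inS N Y \<Longrightarrow> inS N Z \<Longrightarrow>
    smult N X (sadd Y Z) = sadd (smult N X Y) (smult N X Z)"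
  unfolding sadd_eq_lincomb by (rule smult_lincomb_right)

lemma smult_sscale_left:
  "inS N X \<Longrightarrow> inS N Z \<Longrightarrow> smult N (sscale c X) Z = sscale c (smult N X Z)"
  unfolding sscale_eq_lincomb by (rule smult_lincomb_left)

lemma smult_sscale_right:
  "inS N X \<Longrightarrow> inS N Y \<Longrightarrow> smult N X (sscale c Y) = sscale c (smult N X Y)"
  unfolding sscale_eq_lincomb by (rule smult_lincomb_right)

lemma inS_sadd: "inS N X \<Longrightarrow> inS N Y \<Longrightarrow> inS N (sadd X Y)"
  unfolding sadd_eq_lincomb by (rule inS_lincomb)

lemma inS_sdiff: "inS N X \<Longrightarrow> inS N Y \<Longrightarrow> inS N (sdiff X Y)"
  unfolding sdiff_eq_lincomb by (rule inS_lincomb)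

lemma inS_sscale: "inS N X \<Longrightarrow> inS N (sscale c X)"
  unfolding sscale_eq_lincomb by (rule inS_lincomb)

lemma inS_degree_restriction: "inS N X \<Longrightarrow> inS N (\<lambda>p j k. if P p then X p j k else 0)"
  unfolding inS_iff twisted_def vanishes_below_def by (auto 4 3)

lemma inS_diagonal_constant: "inS N (\<lambda>p j k. if p = 0 \<and> j = k \<and> j < N then f j else 0)"
  unfolding inS_iff twisted_def vanishes_below_def by (auto intro!: exI[of _ 0])

lemma inS_Rop: "inS N X \<Longrightarrow> inS N (Rop X)"
  unfolding Rop_def Pge0_def Plt0_def by (intro inS_sdiff inS_degree_restriction)

lemma inS_R0op: "inS N X \<Longrightarrow> inS N (R0op X)"
  unfolding R0op_def Pgt0_def Plt0_def by (intro inS_sdiff inS_degree_restriction)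

lemma inS_Wop: "inS N (Wop N X)"
  unfolding Wop_def by (rule inS_diagonal_constant)

lemma inS_sone: "inS N (sone N)"
  unfolding sone_def using inS_diagonal_constant[of N "\<lambda>_. 1"] .

lemma inS_A1op: "inS N X \<Longrightarrow> inS N (A1op N X)"
  unfolding A1op_def by (intro inS_sadd inS_R0op inS_Wop)

lemma inS_A2op: "inS N X \<Longrightarrow> inS N (A2op N X)"
  unfolding A2op_def by (intro inS_sdiff inS_R0op inS_Wop)

lemma inS_Sop: "inS N X \<Longrightarrow> inS N (Sop N X)"
  unfolding Sop_def P0_def by (intro inS_sdiff inS_degree_restriction inS_Wop)

lemma inS_Sstar: "inS N X \<Longrightarrow> inS N (Sstar N X)"
  unfolding Sstar_def P0_def by (intro inS_sadd inS_degree_restriction inS_Wop)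

lemma smult_sone_left:
  assumes "inS N X"
  shows "smult N (sone N) X = X"
proof (intro ext)
  fix p j k
  have "smult N (sone N) X p j k = (\<Sum>q\<in>{0}. \<Sum>l<N. sone N q j l * X (p - q) l k)"
    by (rule smult_eq_sum) (use assms inS_sone in \<open>auto simp: inS_iff sone_def split: if_splits\<close>)
  also have "\<dots> = X p j k"
    using inS_entry_eq_0[OF assms, of j k p]
    by (cases "j < N") (auto simp: sone_def if_distrib[where f="\<lambda>x. x * _"] cong: if_cong)
  finally show "smult N (sone N) X p j k = X p j k" .
qed

lemma smult_sone_right:
  assumes "inS N X"
  shows "smult N X (sone N) = X"
proof (intro ext)
  fix p j k
  have "smult N X (sone N) p j k = (\<Sum>q\<in>{p}. \<Sum>l<N. X q j l * sone N (p - q) l k)"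
    by (rule smult_eq_sum) (use assms inS_sone in \<open>auto simp: inS_iff sone_def split: if_splits\<close>)
  also have "\<dots> = X p j k"
    using inS_entry_eq_0[OF assms, of j k p] by (auto simp: sone_def if_distrib cong: if_cong)
  finally show "smult N X (sone N) p j k = X p j k" .
qed

section \<open>The pairing\<close>

lemma spair_commute:
  assumes "inS N X" "inS N Y"
  shows "spair N X Y = spair N Y X"
proof -
  obtain a b where a: "vanishes_below X a" and b: "vanishes_below Y b"
    using assms inS_vanishes_below by metis
  have XY: "smult N X Y 0 j j = (\<Sum>q\<in>{a..-b}. \<Sum>l<N. X q j l * Y (-q) l j)" for j
    using smult_eq_sum_superset[OF a b, of "{a..-b}" 0] by simp
  have YX: "smult N Y X 0 j j = (\<Sum>q\<in>{a..-b}. \<Sum>l<N. Y (-q) j l * X q l j)" for j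
  proof -
    have "smult N Y X 0 j j = (\<Sum>q\<in>uminus ` {a..-b}. \<Sum>l<N. Y q j l * X (- q) l j)"
      using smult_eq_sum_superset[OF b a, of "{b..-a}" 0] by simp
    also have "\<dots> = (\<Sum>q\<in>{a..-b}. \<Sum>l<N. Y (-q) j l * X q l j)"
      by (subst sum.reindex) (auto simp: inj_on_def)
    finally show ?thesis .
  qed
  have "spair N X Y = (\<Sum>q\<in>{a..-b}. \<Sum>j<N. \<Sum>l<N. X q j l * Y (-q) l j)"
    unfolding spair_def XY by (rule sum.swap)
  also have "\<dots> = (\<Sum>q\<in>{a..-b}. \<Sum>l<N. \<Sum>j<N. Y (-q) l j * X q j l)"
    by (subst (2) sum.swap) (simp add: mult.commute)
  also have "\<dots> = spair N Y X"
    unfolding spair_def YX by (rule sum.swap[symmetric])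
  finally show ?thesis .
qed

lemma spair_lincomb_right:
  assumes "inS N X" "inS N Y" "inS N Z"
  shows "spair N X (\<lambda>p j k. u * Y p j k + v * Z p j k) = u * spair N X Y + v * spair N X Z"
  unfolding spair_def smult_lincomb_right[OF assms] by (simp add: sum.distrib sum_distrib_left)

lemma spair_sadd_right:
  "inS N X \<Longrightarrow> inS N Y \<Longrightarrow> inS N Z \<Longrightarrow> spair N X (sadd Y Z) = spair N X Y + spair N X Z"
  unfolding sadd_eq_lincomb using spair_lincomb_right[of N X Y Z 1 1] by simp

lemma spair_sdiff_right:
  "inS N X \<Longrightarrow> inS N Y \<Longrightarrow> inS N Z \<Longrightarrow> spair N X (sdiff Y Z) = spair N X Y - spair N X Z"
  unfolding sdiff_eq_lincomb using spair_lincomb_right[of N X Y Z 1 "-1"] by simp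

lemma spair_sscale_right:
  "inS N X \<Longrightarrow> inS N Y \<Longrightarrow> spair N X (sscale c Y) = c * spair N X Y"
  unfolding sscale_eq_lincomb using spair_lincomb_right[of N X Y Y c 0] by simp

lemma spair_smult_assoc:
  "inS N X \<Longrightarrow> inS N Y \<Longrightarrow> inS N Z \<Longrightarrow> spair N (smult N X Y) Z = spair N X (smult N Y Z)"
  unfolding spair_def by (simp add: smult_assoc)

lemma spair_smult_cycle:
  "inS N X \<Longrightarrow> inS N Y \<Longrightarrow> inS N Z \<Longrightarrow> spair N X (smult N Y Z) = spair N Y (smult N Z X)"
  by (metis spair_commute spair_smult_assoc inS_smult)

section \<open>Gradients\<close>

lemma inG_sadd_sscale:
  assumes "inG N T" "inG N M"
  shows "inG N (sadd T (sscale c M))"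
proof -
  obtain d1 d2 where "\<forall>p>d1. \<forall>j k. T p j k = 0" "\<forall>p>d2. \<forall>j k. M p j k = 0"
    using assms unfolding inG_def by blast
  then have "\<forall>p>max d1 d2. \<forall>j k. sadd T (sscale c M) p j k = 0"
    by (simp add: sadd_def sscale_def)
  moreover have "inS N (sadd T (sscale c M))"
    using assms by (intro inS_sadd inS_sscale inG_inS)
  ultimately show ?thesis unfolding inG_def by blast
qed

text \<open>The element of \<open>\<g>\<close> dual, under the pairing, to the entry \<open>(j0, k0)\<close> of the
  \<open>\<lambda>^p0\<close> coefficient.\<close>
definition dual_basis :: "int \<Rightarrow> nat \<Rightarrow> nat \<Rightarrow> ser" where
  "dual_basis p0 j0 k0 = (\<lambda>p j k. if p = - p0 \<and> j = k0 \<and> k = j0 then 1 else 0)"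

lemma inG_dual_basis:
  assumes "j0 < N" "k0 < N" "int N dvd (int j0 - int k0 - p0)"
  shows "inG N (dual_basis p0 j0 k0)"
proof -
  have "int N dvd - (int j0 - int k0 - p0)" using assms(3) by (simp only: dvd_minus_iff)
  also have "- (int j0 - int k0 - p0) = int k0 - int j0 - (- p0)" by simp
  finally have "int N dvd (int k0 - int j0 - (- p0))" .
  then show ?thesis
    using assms unfolding inG_def inS_def dual_basis_def by (auto intro!: exI[of _ "- p0"])
qed

lemma spair_dual_basis:
  assumes "inS N G" "j0 < N" "k0 < N"
  shows "spair N G (dual_basis p0 j0 k0) = G p0 j0 k0"
proof -
  have "\<exists>a. vanishes_below (dual_basis p0 j0 k0) a"
    unfolding vanishes_below_def dual_basis_def by (auto intro!: exI[of _ "- p0"])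
  then have "smult N G (dual_basis p0 j0 k0) 0 j j
      = (\<Sum>q\<in>{p0}. \<Sum>l<N. G q j l * dual_basis p0 j0 k0 (0 - q) l j)" for j
    by (intro smult_eq_sum) (use assms in \<open>auto simp: inS_iff dual_basis_def split: if_splits\<close>)
  then have "smult N G (dual_basis p0 j0 k0) 0 j j = (if j = j0 then G p0 j k0 else 0)" for j
    using assms by (auto simp: dual_basis_def if_distrib[where f="\<lambda>x. _ * x"] cong: if_cong)
  then show ?thesis using assms unfolding spair_def by simp
qed

lemma is_grad_inG_unique:
  assumes "is_grad N (inG N) f T G1" "is_grad N (inG N) f T G2"
  shows "G1 = G2"
proof (intro ext)
  fix p j k
  have G1: "inS N G1" and G2: "inS N G2" using assms is_grad_def by auto
  have same_pairing: "spair N G1 M = spair N G2 M" if "inG N M" for M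
    using assms that unfolding is_grad_def by (meson vector_derivative_unique_at)
  show "G1 p j k = G2 p j k"
  proof (cases "G1 p j k = 0 \<and> G2 p j k = 0")
    case False
    then have "j < N \<and> k < N \<and> int N dvd (int j - int k - p)"
      using G1 G2 unfolding inS_def by blast
    then show ?thesis
      using same_pairing[OF inG_dual_basis] spair_dual_basis[OF G1] spair_dual_basis[OF G2]
      by metis
  qed simp
qed

lemma grad_eqI: "is_grad N (inG N) f T G \<Longrightarrow> grad N (inG N) f T = G"
  unfolding grad_def by (rule some_equality) (auto intro: is_grad_inG_unique)

lemma is_grad_grad:
  assumes "\<exists>G. is_grad N D f L G"
  shows "is_grad N D f L (grad N D f L)"
  using assms unfolding grad_def by (rule someI_ex)

lemma inS_grad: "\<exists>G. is_grad N D f L G \<Longrightarrow> inS N (grad N D f L)"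
  using is_grad_grad is_grad_def by blast

lemma is_grad_inG_cong:
  assumes "is_grad N (inG N) g T G" "inG N T" "\<And>T'. inG N T' \<Longrightarrow> f T' = g T'"
  shows "is_grad N (inG N) f T G"
  using assms(1) unfolding is_grad_def by (simp add: assms(2,3) inG_sadd_sscale)

lemma is_grad_compose_smult_right:
  assumes B: "inS N B" and T: "inS N T" and G: "is_grad N (inS N) \<phi> (smult N T B) G"
  shows "is_grad N (inG N) (\<lambda>T'. \<phi> (smult N T' B)) T (smult N B G)"
  unfolding is_grad_def
proof (intro conjI allI impI)
  have GS: "inS N G" using G is_grad_def by blast
  then show "inS N (smult N B G)" using B by (rule inS_smult[rotated])
  fix M assume "inG N M"
  then have M: "inS N M" by (rule inG_inS)
  have "(\<lambda>e::real. \<phi> (smult N (sadd T (sscale (complex_of_real e) M)) B))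
      = (\<lambda>e. \<phi> (sadd (smult N T B) (sscale (complex_of_real e) (smult N M B))))"
    by (simp add: smult_sadd_left smult_sscale_left T M B inS_sscale)
  moreover have "spair N G (smult N M B) = spair N (smult N B G) M"
    by (metis spair_commute spair_smult_assoc inS_smult M B GS)
  moreover have "inS N (smult N M B)" using M B by (rule inS_smult)
  ultimately show "((\<lambda>e::real. \<phi> (smult N (sadd T (sscale (complex_of_real e) M)) B))
      has_vector_derivative spair N (smult N B G) M) (at 0)"
    using G unfolding is_grad_def by metis
qed

lemma is_grad_compose_smult_left:
  assumes B: "inS N B" and T: "inS N T" and G: "is_grad N (inS N) \<phi> (smult N B T) G"
  shows "is_grad N (inG N) (\<lambda>T'. \<phi> (smult N B T')) T (smult N G B)"
  unfolding is_grad_def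
proof (intro conjI allI impI)
  have GS: "inS N G" using G is_grad_def by blast
  then show "inS N (smult N G B)" using B by (rule inS_smult)
  fix M assume "inG N M"
  then have M: "inS N M" by (rule inG_inS)
  have "(\<lambda>e::real. \<phi> (smult N B (sadd T (sscale (complex_of_real e) M))))
      = (\<lambda>e. \<phi> (sadd (smult N B T) (sscale (complex_of_real e) (smult N B M))))"
    by (simp add: smult_sadd_right smult_sscale_right T M B inS_sscale)
  moreover have "spair N G (smult N B M) = spair N (smult N G B) M"
    by (metis spair_smult_assoc M B GS)
  moreover have "inS N (smult N B M)" using B M by (rule inS_smult)
  ultimately show "((\<lambda>e::real. \<phi> (smult N B (sadd T (sscale (complex_of_real e) M))))
      has_vector_derivative spair N (smult N G B) M) (at 0)"
    using G unfolding is_grad_def by metis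
qed

section \<open>The dressing matrix \<open>\<F>\<close> and its inverse\<close>

lemma Suc_mod_eq: "l < N \<Longrightarrow> (l + 1) mod N = (if l + 1 = N then 0 else l + 1)" for l N :: nat
  by auto

lemma pred_mod_eq: "j < N \<Longrightarrow> (j + N - 1) mod N = (if j = 0 then N - 1 else j - 1)" for j N :: nat
  by (auto simp: le_mod_geq)

lemma eq_Suc_mod_iff:
  fixes j l N :: nat
  assumes "j < N" "l < N"
  shows "j = (l + 1) mod N \<longleftrightarrow> l = (j + N - 1) mod N"
  using Suc_mod_eq[OF assms(2)] pred_mod_eq[OF assms(1)] assms by (simp only:) auto

lemma int_dvd_mod_diff: "int N dvd (int (m mod N) - int m)"
  by (metis mod_eq_dvd_iff mod_mod_trivial of_nat_mod)

lemma eq_if_int_dvd_diff: "int N dvd (int j - int k) \<Longrightarrow> j < N \<Longrightarrow> k < N \<Longrightarrow> j = k"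
  by (metis mod_eq_dvd_iff of_nat_mod of_nat_eq_iff mod_less)

lemma inS_Fmat: "inS N (Fmat N \<alpha>)"
proof -
  have "twisted N (Fmat N \<alpha>)"
    unfolding twisted_def
  proof (intro allI impI)
    fix p j k assume nz: "Fmat N \<alpha> p j k \<noteq> 0"
    show "j < N \<and> k < N \<and> int N dvd (int j - int k - p)"
    proof (cases "p = 0 \<and> j = k \<and> j < N")
      case False
      then have "p = 1" "k < N" "j = (k + 1) mod N"
        using nz by (auto simp: Fmat_def split: if_splits)
      then show ?thesis using int_dvd_mod_diff[of N "k + 1"] by (simp add: algebra_simps)
    qed simp
  qed
  moreover have "vanishes_below (Fmat N \<alpha>) 0" unfolding vanishes_below_def Fmat_def by auto
  ultimately show ?thesis using inS_iff by blast
qed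

lemma Fmat_degree: "Fmat N \<alpha> p j k \<noteq> 0 \<Longrightarrow> p = 0 \<or> p = 1"
  unfolding Fmat_def by (auto split: if_splits)

lemma smult_Fmat_right:
  assumes "inS N X"
  shows "smult N X (Fmat N \<alpha>) p j k =
    (if k < N then X p j k - complex_of_real \<alpha> * X (p - 1) j ((k + 1) mod N) else 0)"
proof -
  have "smult N X (Fmat N \<alpha>) p j k = (\<Sum>q\<in>{p, p - 1}. \<Sum>l<N. X q j l * Fmat N \<alpha> (p - q) l k)"
  proof (rule smult_eq_sum)
    fix q l assume "X q j l * Fmat N \<alpha> (p - q) l k \<noteq> 0"
    then show "q \<in> {p, p - 1}" using Fmat_degree[of N \<alpha> "p - q" l k] by auto
  qed (use assms inS_Fmat in \<open>auto simp: inS_iff\<close>)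
  also have "\<dots> = (\<Sum>l<N. X p j l * Fmat N \<alpha> 0 l k) + (\<Sum>l<N. X (p - 1) j l * Fmat N \<alpha> 1 l k)"
    by simp
  also have "(\<Sum>l<N. X p j l * Fmat N \<alpha> 0 l k) = (if k < N then X p j k else 0)"
    by (simp add: Fmat_def if_distrib[where f="\<lambda>x. _ * x"] cong: if_cong)
  also have "(\<Sum>l<N. X (p - 1) j l * Fmat N \<alpha> 1 l k)
      = (if k < N then - complex_of_real \<alpha> * X (p - 1) j ((k + 1) mod N) else 0)"
    by (simp add: Fmat_def if_distrib[where f="\<lambda>x. _ * x"] sum.delta' sum_negf cong: if_cong)
  finally show ?thesis by auto
qed

lemma smult_Fmat_left:
  assumes "inS N X"
  shows "smult N (Fmat N \<alpha>) X p j k =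
    (if j < N then X p j k - complex_of_real \<alpha> * X (p - 1) ((j + N - 1) mod N) k else 0)"
proof -
  have "smult N (Fmat N \<alpha>) X p j k = (\<Sum>q\<in>{0, 1}. \<Sum>l<N. Fmat N \<alpha> q j l * X (p - q) l k)"
  proof (rule smult_eq_sum)
    fix q l assume "Fmat N \<alpha> q j l * X (p - q) l k \<noteq> 0"
    then show "q \<in> {0, 1}" using Fmat_degree[of N \<alpha> q j l] by auto
  qed (use assms inS_Fmat in \<open>auto simp: inS_iff\<close>)
  also have "\<dots> = (\<Sum>l<N. Fmat N \<alpha> 0 j l * X p l k) + (\<Sum>l<N. Fmat N \<alpha> 1 j l * X (p - 1) l k)"
    by simp
  also have "(\<Sum>l<N. Fmat N \<alpha> 0 j l * X p l k) = (if j < N then X p j k else 0)"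
    by (cases "j < N") (auto simp: Fmat_def if_distrib[where f="\<lambda>x. x * _"] cong: if_cong)
  also have "(\<Sum>l<N. Fmat N \<alpha> 1 j l * X (p - 1) l k)
      = (\<Sum>l<N. if l = (j + N - 1) mod N then
                   (if j < N then - complex_of_real \<alpha> * X (p - 1) l k else 0) else 0)"
  proof (rule sum.cong)
    fix l assume "l \<in> {..<N}"
    then show "Fmat N \<alpha> 1 j l * X (p - 1) l k
      = (if l = (j + N - 1) mod N then
           (if j < N then - complex_of_real \<alpha> * X (p - 1) l k else 0) else 0)"
      using eq_Suc_mod_iff[of j N l] mod_less_divisor[of N "l + 1"] by (auto simp: Fmat_def)
  qed simp
  also have "\<dots> = (if j < N then - complex_of_real \<alpha> * X (p - 1) ((j + N - 1) mod N) k else 0)"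
    by (cases "j < N") (auto simp: sum.delta')
  finally show ?thesis by auto
qed

text \<open>\<open>\<F> = I - \<alpha>\<lambda>\<Lambda>\<close> with \<open>\<Lambda>\<close> the cyclic shift \<open>E\<^sub>k\<^sub>+\<^sub>1\<^sub>,\<^sub>k\<close>, so
  \<open>\<F>\<^sup>-\<^sup>1 = \<Sum>\<^sub>p (\<alpha>\<lambda>\<Lambda>)\<^sup>p\<close> and \<open>\<Lambda>\<^sup>p\<close> maps \<open>k\<close> to \<open>k + p mod N\<close>.\<close>
definition Finv_series :: "nat \<Rightarrow> real \<Rightarrow> ser" where
  "Finv_series N \<alpha> = (\<lambda>p j k. if 0 \<le> p \<and> k < N \<and> j = (k + nat p) mod N
      then complex_of_real \<alpha> ^ nat p else 0)"

lemma inS_Finv_series: "inS N (Finv_series N \<alpha>)"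
proof -
  have "twisted N (Finv_series N \<alpha>)"
    unfolding twisted_def
  proof (intro allI impI)
    fix p j k assume "Finv_series N \<alpha> p j k \<noteq> 0"
    then have "0 \<le> p" "k < N" "j = (k + nat p) mod N"
      by (auto simp: Finv_series_def split: if_splits)
    then show "j < N \<and> k < N \<and> int N dvd (int j - int k - p)"
      using int_dvd_mod_diff[of N "k + nat p"] by (simp add: algebra_simps)
  qed
  moreover have "vanishes_below (Finv_series N \<alpha>) 0"
    unfolding vanishes_below_def Finv_series_def by auto
  ultimately show ?thesis using inS_iff by blast
qed

lemma smult_Finv_series_Fmat: "smult N (Finv_series N \<alpha>) (Fmat N \<alpha>) = sone N"
proof (intro ext)
  fix p :: int and j k :: nat
  consider "\<not> k < N" | "k < N" "p \<le> 0" | "k < N" "p > 0" by (meson not_less)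
  then show "smult N (Finv_series N \<alpha>) (Fmat N \<alpha>) p j k = sone N p j k"
  proof cases
    case 3
    have "nat p = nat (p - 1) + 1" using 3 by simp
    then have "((k + 1) mod N + nat (p - 1)) mod N = (k + nat p) mod N"
      by (simp add: mod_add_left_eq)
    then show ?thesis
      unfolding smult_Fmat_right[OF inS_Finv_series]
      using 3 by (simp add: Finv_series_def sone_def \<open>nat p = nat (p - 1) + 1\<close>)
  qed (unfold smult_Fmat_right[OF inS_Finv_series], auto simp: Finv_series_def sone_def)
qed

lemma smult_Fmat_Finv_series: "smult N (Fmat N \<alpha>) (Finv_series N \<alpha>) = sone N"
proof (intro ext)
  fix p :: int and j k :: nat
  consider "\<not> j < N" | "j < N" "p \<le> 0" | "j < N" "p > 0" by (meson not_less)
  then show "smult N (Fmat N \<alpha>) (Finv_series N \<alpha>) p j k = sone N p j k"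
  proof cases
    case 3
    define m where "m = (k + nat (p - 1)) mod N"
    have "nat p = nat (p - 1) + 1" using 3 by simp
    then have "(m + 1) mod N = (k + nat p) mod N" unfolding m_def by (simp add: mod_Suc_eq)
    moreover have "m < N" using 3 m_def by simp
    ultimately have "(j + N - 1) mod N = m \<longleftrightarrow> j = (k + nat p) mod N"
      using eq_Suc_mod_iff[of j N m] 3 by auto
    then show ?thesis
      unfolding smult_Fmat_left[OF inS_Finv_series]
      using 3 by (simp add: Finv_series_def sone_def m_def \<open>nat p = nat (p - 1) + 1\<close>)
  qed (unfold smult_Fmat_left[OF inS_Finv_series], auto simp: Finv_series_def sone_def)
qed

lemma Finv_eq_Finv_series: "Finv N \<alpha> = Finv_series N \<alpha>"
  unfolding Finv_def
proof (rule the_equality)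
  fix Y assume Y: "inS N Y \<and> smult N (Fmat N \<alpha>) Y = sone N \<and> smult N Y (Fmat N \<alpha>) = sone N"
  have "Y = smult N Y (smult N (Fmat N \<alpha>) (Finv_series N \<alpha>))"
    using Y by (simp add: smult_Fmat_Finv_series smult_sone_right)
  also have "\<dots> = Finv_series N \<alpha>"
    using Y by (simp add: smult_assoc[symmetric] inS_Fmat inS_Finv_series smult_sone_left)
  finally show "Y = Finv_series N \<alpha>" .
qed (simp add: inS_Finv_series smult_Finv_series_Fmat smult_Fmat_Finv_series)

lemma inS_Finv: "inS N (Finv N \<alpha>)"
  by (simp add: Finv_eq_Finv_series inS_Finv_series)

lemma smult_Finv_Fmat: "smult N (Finv N \<alpha>) (Fmat N \<alpha>) = sone N"
  by (simp add: Finv_eq_Finv_series smult_Finv_series_Fmat)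

lemma smult_Fmat_Finv: "smult N (Fmat N \<alpha>) (Finv N \<alpha>) = sone N"
  by (simp add: Finv_eq_Finv_series smult_Fmat_Finv_series)

lemma smult_Fmat_Finv_smult: "inS N X \<Longrightarrow> smult N (Fmat N \<alpha>) (smult N (Finv N \<alpha>) X) = X"
  by (simp add: smult_assoc[symmetric] inS_Fmat inS_Finv smult_Fmat_Finv smult_sone_left)

section \<open>The operator \<open>W\<close> around the cycle of indices\<close>

lemma sum_lessThan_cyclic_telescope:
  fixes f :: "nat \<Rightarrow> 'a::ab_group_add"
  assumes "j \<le> N"
  shows "(\<Sum>i<j. f i - f ((i + N - 1) mod N)) = f ((j + N - 1) mod N) - f (N - 1)"
  using assms
proof (induction j)
  case 0
  then show ?case by (cases N) auto
next
  case (Suc j)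
  then show ?case by simp
qed

lemma sum_sgn_cyclic_telescope:
  fixes f :: "nat \<Rightarrow> 'a::comm_ring_1"
  assumes j: "j < N"
  shows "(\<Sum>i<N. of_int (sgn (int i - int j)) * (f i - f ((i + N - 1) mod N)))
       = 2 * f (N - 1) - f j - f ((j + N - 1) mod N)"
proof -
  define d where "d i = f i - f ((i + N - 1) mod N)" for i
  have ring_identity: "- (a - b) + (b - c) = 2 * b - c - a" for a b c :: 'a
    by (simp add: algebra_simps)
  have below: "(\<Sum>i<k. d i) = f ((k + N - 1) mod N) - f (N - 1)" if "k \<le> N" for k
    unfolding d_def using that by (rule sum_lessThan_cyclic_telescope)
  have above: "(\<Sum>i\<in>{Suc j..<N}. d i) = f (N - 1) - f j"
  proof -
    have "(\<Sum>i<N. d i) = (\<Sum>i<Suc j. d i) + (\<Sum>i\<in>{Suc j..<N}. d i)"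
      using sum.atLeastLessThan_concat[of 0 "Suc j" N d] j by (simp only: atLeast0LessThan)
    then have "(\<Sum>i\<in>{Suc j..<N}. d i) = (\<Sum>i<N. d i) - (\<Sum>i<Suc j. d i)"
      by (metis add_diff_cancel_left')
    moreover have "N + N - 1 = (N - 1) + N" using j by simp
    then have "(N + N - 1) mod N = N - 1"
      using j by (metis mod_add_self2 mod_less diff_less zero_less_one gr_zeroI less_zeroE)
    ultimately show ?thesis using below[of N] below[of "Suc j"] j by simp
  qed
  have "(\<Sum>i<N. of_int (sgn (int i - int j)) * d i)
      = (\<Sum>i<j. - d i) + (\<Sum>i\<in>{Suc j..<N}. d i)"
    using sum.atLeastLessThan_concat[of 0 j N "\<lambda>i. of_int (sgn (int i - int j)) * d i"]
      sum.atLeast_Suc_lessThan[OF j, of "\<lambda>i. of_int (sgn (int i - int j)) * d i"]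
    using j by (simp add: atLeast0LessThan)
  also have "\<dots> = - (f ((j + N - 1) mod N) - f (N - 1)) + (f (N - 1) - f j)"
    by (simp only: sum_negf below[OF less_imp_le[OF j]] above)
  also have "\<dots> = 2 * f (N - 1) - f j - f ((j + N - 1) mod N)"
    using ring_identity .
  finally show ?thesis unfolding d_def .
qed

lemma inS_entry_shift_right_eq_0:
  assumes "inS N E" "j < N" "k < N" "j \<noteq> k"
  shows "E (-1) j ((k + 1) mod N) = 0"
proof (rule ccontr)
  assume "E (-1) j ((k + 1) mod N) \<noteq> 0"
  then have "int N dvd (int j - int ((k + 1) mod N) + 1)"
    using inS_entry_dvd[OF assms(1)] by fastforce
  then have "int N dvd (int j - int ((k + 1) mod N) + 1) + (int ((k + 1) mod N) - int (k + 1))"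
    using int_dvd_mod_diff by (rule dvd_add)
  then have "int N dvd (int j - int k)" by simp
  then show False using eq_if_int_dvd_diff assms(2-4) by blast
qed

lemma inS_entry_shift_left_eq_0:
  assumes "inS N E" "j < N" "k < N" "j \<noteq> k"
  shows "E (-1) ((j + N - 1) mod N) k = 0"
proof (rule ccontr)
  let ?i = "(j + N - 1) mod N"
  assume "E (-1) ?i k \<noteq> 0"
  then have "int N dvd (int ?i - int k + 1)"
    using inS_entry_dvd[OF assms(1)] by fastforce
  moreover have "(?i + 1) mod N = j"
    using eq_Suc_mod_iff[of j N ?i] assms(2) by simp
  then have "int N dvd (int j - int (?i + 1))"
    using int_dvd_mod_diff[of N "?i + 1"] by simp
  ultimately have "int N dvd (int ?i - int k + 1) + (int j - int (?i + 1))"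
    by (rule dvd_add)
  then have "int N dvd (int j - int k)" by simp
  then show False using eq_if_int_dvd_diff assms(2-4) by blast
qed

lemma Wop_smult_Fmat_diff:
  assumes E: "inS N E" and j: "j < N"
  defines "e \<equiv> \<lambda>m. E (-1) m ((m + 1) mod N)"
  shows "Wop N (smult N E (Fmat N \<alpha>)) 0 j j - Wop N (smult N (Fmat N \<alpha>) E) 0 j j
       = - complex_of_real \<alpha> * (2 * e (N - 1) - e j - e ((j + N - 1) mod N))"
proof -
  have diag: "smult N E (Fmat N \<alpha>) 0 i i - smult N (Fmat N \<alpha>) E 0 i i
      = - complex_of_real \<alpha> * (e i - e ((i + N - 1) mod N))" if "i < N" for i
  proof -
    have "((i + N - 1) mod N + 1) mod N = i"
      using eq_Suc_mod_iff[of i N "(i + N - 1) mod N"] that by simp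
    then show ?thesis
      using that by (simp add: smult_Fmat_right[OF E] smult_Fmat_left[OF E] e_def algebra_simps)
  qed
  have "Wop N (smult N E (Fmat N \<alpha>)) 0 j j - Wop N (smult N (Fmat N \<alpha>) E) 0 j j
      = (\<Sum>i<N. of_int (sgn (int i - int j))
           * (smult N E (Fmat N \<alpha>) 0 i i - smult N (Fmat N \<alpha>) E 0 i i))"
    using j by (simp add: Wop_def sum_subtractf[symmetric] algebra_simps)
  also have "\<dots> = - complex_of_real \<alpha>
      * (\<Sum>i<N. of_int (sgn (int i - int j)) * (e i - e ((i + N - 1) mod N)))"
    by (simp add: diag sum_distrib_left algebra_simps)
  also have "\<dots> = - complex_of_real \<alpha> * (2 * e (N - 1) - e j - e ((j + N - 1) mod N))"
    using sum_sgn_cyclic_telescope[OF j, of e] by simp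
  finally show ?thesis .
qed

section \<open>Commuting \<open>\<F>\<close> through the operators of the bracket\<close>

lemma sadd_A1op_Sop_degree_0:
  "sadd (A1op N X) (Sop N Y) 0 j k = Wop N X 0 j k - Wop N Y 0 j k + Y 0 j k"
  by (simp add: A1op_def Sop_def sadd_def sdiff_def R0op_def Pgt0_def Plt0_def P0_def)

lemma sadd_A2op_Sstar_degree_0:
  "sadd (A2op N X) (Sstar N Y) 0 j k = Wop N Y 0 j k - Wop N X 0 j k + Y 0 j k"
  by (simp add: A2op_def Sstar_def sadd_def sdiff_def R0op_def Pgt0_def Plt0_def P0_def)

lemma sadd_A1op_Sop_nonzero_degree:
  "p \<noteq> 0 \<Longrightarrow> sadd (A1op N X) (Sop N Y) p j k = Rop X p j k"
  by (simp add: A1op_def Sop_def sadd_def sdiff_def R0op_def Rop_def Pgt0_def Pge0_def Plt0_def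
      P0_def Wop_def)

lemma sadd_A2op_Sstar_nonzero_degree:
  "p \<noteq> 0 \<Longrightarrow> sadd (A2op N X) (Sstar N Y) p j k = Rop X p j k"
  by (simp add: A2op_def Sstar_def sadd_def sdiff_def R0op_def Rop_def Pgt0_def Pge0_def Plt0_def
      P0_def Wop_def)

lemma Rop_apply: "Rop E p j k = (if 0 \<le> p then E p j k else - E p j k)"
  by (simp add: Rop_def sdiff_def Pge0_def Plt0_def)

text \<open>Multiplication by \<open>\<F>\<close> only mixes the degrees \<open>p\<close> and \<open>p - 1\<close>, which have the
  same sign unless \<open>p = 0\<close>.\<close>
lemma smult_Rop_Fmat_nonzero_degree:
  "inS N E \<Longrightarrow> p \<noteq> 0 \<Longrightarrow> smult N (Rop E) (Fmat N \<alpha>) p j k = Rop (smult N E (Fmat N \<alpha>)) p j k"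
  by (simp add: smult_Fmat_right inS_Rop Rop_apply)

lemma smult_Fmat_Rop_nonzero_degree:
  "inS N E \<Longrightarrow> p \<noteq> 0 \<Longrightarrow> smult N (Fmat N \<alpha>) (Rop E) p j k = Rop (smult N (Fmat N \<alpha>) E) p j k"
  by (simp add: smult_Fmat_left inS_Rop Rop_apply)

lemma sadd_A1op_Sop_Fmat:
  fixes \<alpha> :: real
  assumes E: "inS N E"
  defines "c \<equiv> - 2 * complex_of_real \<alpha> * E (-1) (N - 1) 0"
  shows "sadd (A1op N (smult N E (Fmat N \<alpha>))) (Sop N (smult N (Fmat N \<alpha>) E))
       = sadd (smult N (Rop E) (Fmat N \<alpha>)) (sscale c (sone N))" (is "?L = ?R")
proof (intro ext)
  fix p :: int and j k :: nat
  show "?L p j k = ?R p j k"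
  proof (cases "p = 0")
    case False
    then show ?thesis
      unfolding sadd_A1op_Sop_nonzero_degree[OF False]
      by (simp add: smult_Rop_Fmat_nonzero_degree[OF E False] sadd_def sscale_def sone_def)
  next
    case True
    consider "\<not> (j < N \<and> k < N)" | "j < N" "k < N" "j \<noteq> k" | "j < N" "j = k" by blast
    then show ?thesis
    proof cases
      case 1
      have "inS N ?L" "inS N ?R"
        using E by (auto intro!: inS_sadd inS_A1op inS_Sop inS_smult inS_Fmat inS_Rop inS_sscale
            inS_sone)
      then show ?thesis using 1 inS_entry_eq_0 by metis
    next
      case 2
      then show ?thesis
        using inS_entry_shift_right_eq_0[OF E] inS_entry_shift_left_eq_0[OF E]
        unfolding True sadd_A1op_Sop_degree_0 by (simp add: Wop_def sadd_def sscale_def sone_def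
            smult_Fmat_left[OF E] smult_Fmat_right[OF inS_Rop[OF E]] Rop_apply)
    next
      case 3
      have "((j + N - 1) mod N + 1) mod N = j"
        using eq_Suc_mod_iff[of j N "(j + N - 1) mod N"] 3 by simp
      moreover have "(N - 1 + 1) mod N = 0" using 3 by simp
      ultimately show ?thesis
        using 3 Wop_smult_Fmat_diff[OF E \<open>j < N\<close>, of \<alpha>]
        unfolding True sadd_A1op_Sop_degree_0 by (simp add: sadd_def sscale_def sone_def c_def
            smult_Fmat_left[OF E] smult_Fmat_right[OF inS_Rop[OF E]] Rop_apply algebra_simps)
    qed
  qed
qed

lemma sadd_A2op_Sstar_Fmat:
  fixes \<alpha> :: real
  assumes E: "inS N E"
  defines "c \<equiv> - 2 * complex_of_real \<alpha> * E (-1) (N - 1) 0"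
  shows "sadd (A2op N (smult N (Fmat N \<alpha>) E)) (Sstar N (smult N E (Fmat N \<alpha>)))
       = sadd (smult N (Fmat N \<alpha>) (Rop E)) (sscale c (sone N))" (is "?L = ?R")
proof (intro ext)
  fix p :: int and j k :: nat
  show "?L p j k = ?R p j k"
  proof (cases "p = 0")
    case False
    then show ?thesis
      unfolding sadd_A2op_Sstar_nonzero_degree[OF False]
      by (simp add: smult_Fmat_Rop_nonzero_degree[OF E False] sadd_def sscale_def sone_def)
  next
    case True
    consider "\<not> (j < N \<and> k < N)" | "j < N" "k < N" "j \<noteq> k" | "j < N" "j = k" by blast
    then show ?thesis
    proof cases
      case 1
      have "inS N ?L" "inS N ?R"
        using E by (auto intro!: inS_sadd inS_A2op inS_Sstar inS_smult inS_Fmat inS_Rop inS_sscale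
            inS_sone)
      then show ?thesis using 1 inS_entry_eq_0 by metis
    next
      case 2
      then show ?thesis
        using inS_entry_shift_right_eq_0[OF E] inS_entry_shift_left_eq_0[OF E]
        unfolding True sadd_A2op_Sstar_degree_0 by (simp add: Wop_def sadd_def sscale_def sone_def
            smult_Fmat_right[OF E] smult_Fmat_left[OF inS_Rop[OF E]] Rop_apply)
    next
      case 3
      have "((j + N - 1) mod N + 1) mod N = j"
        using eq_Suc_mod_iff[of j N "(j + N - 1) mod N"] 3 by simp
      moreover have "(N - 1 + 1) mod N = 0" using 3 by simp
      ultimately show ?thesis
        using 3 Wop_smult_Fmat_diff[OF E \<open>j < N\<close>, of \<alpha>]
        unfolding True sadd_A2op_Sstar_degree_0 by (simp add: sadd_def sscale_def sone_def c_def
            smult_Fmat_right[OF E] smult_Fmat_left[OF inS_Rop[OF E]] Rop_apply algebra_simps)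
    qed
  qed
qed

section \<open>The Hamiltonian flow of \<open>\<psi>\<close>\<close>

lemma grad_compose_smult:
  assumes B: "inS N B" and T: "inG N T"
    and grad_ex: "\<forall>L. inS N L \<longrightarrow> (\<exists>G. is_grad N (inS N) \<phi> L G)"
    and commute: "\<forall>T. inG N T \<longrightarrow> \<phi> (smult N T B) = \<phi> (smult N B T)"
  shows "grad N (inG N) (\<lambda>T'. \<phi> (smult N T' B)) T = smult N B (grad N (inS N) \<phi> (smult N T B))"
    and "grad N (inG N) (\<lambda>T'. \<phi> (smult N T' B)) T = smult N (grad N (inS N) \<phi> (smult N B T)) B"
proof -
  let ?\<psi> = "\<lambda>T'. \<phi> (smult N T' B)" and ?\<psi>' = "\<lambda>T'. \<phi> (smult N B T')"
  let ?G = "grad N (inS N) \<phi> (smult N T B)" and ?G' = "grad N (inS N) \<phi> (smult N B T)"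
  have TS: "inS N T" using T by (rule inG_inS)
  have G: "is_grad N (inS N) \<phi> (smult N T B) ?G" and G': "is_grad N (inS N) \<phi> (smult N B T) ?G'"
    using grad_ex inS_smult[OF TS B] inS_smult[OF B TS] by (blast intro: is_grad_grad)+
  have "is_grad N (inG N) ?\<psi>' T (smult N ?G' B)"
    using G' by (rule is_grad_compose_smult_left[OF B TS])
  then have "is_grad N (inG N) ?\<psi> T (smult N ?G' B)"
    by (rule is_grad_inG_cong[OF _ T]) (use commute in auto)
  then show "grad N (inG N) ?\<psi> T = smult N ?G' B"
    by (rule grad_eqI)
  show "grad N (inG N) ?\<psi> T = smult N B ?G"
    using G by (intro grad_eqI is_grad_compose_smult_right[OF B TS])
qed

lemma PB2_eq_dressed:
  fixes \<alpha> :: real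
  assumes T: "inS N T" and E: "inS N E" and f: "\<exists>G. is_grad N (inG N) f T G"
    and d: "smult N T (grad N (inG N) \<psi> T) = smult N (Fmat N \<alpha>) E"
    and d': "smult N (grad N (inG N) \<psi> T) T = smult N E (Fmat N \<alpha>)"
  shows "PB2 N \<psi> f T = spair N (grad N (inG N) f T)
     (sdiff (smult N T (sscale (1/2) (smult N (Rop E) (Fmat N \<alpha>))))
            (smult N (sscale (1/2) (smult N (Fmat N \<alpha>) (Rop E))) T))"
proof -
  define F where "F = Fmat N \<alpha>"
  define Y where "Y = grad N (inG N) f T"
  define c where "c = - 2 * complex_of_real \<alpha> * E (-1) (N - 1) 0"
  define P where "P = A1op N (smult N E F)"
  define Q where "Q = Sop N (smult N F E)"
  define P' where "P' = A2op N (smult N F E)"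
  define Q' where "Q' = Sstar N (smult N E F)"
  have F: "inS N F" unfolding F_def by (rule inS_Fmat)
  have Y: "inS N Y" unfolding Y_def using f by (rule inS_grad)
  have PQ: "inS N P" "inS N Q" "inS N P'" "inS N Q'"
    unfolding P_def Q_def P'_def Q'_def using E F
    by (auto intro!: inS_A1op inS_Sop inS_A2op inS_Sstar inS_smult)
  have RE: "inS N (Rop E)" using E by (rule inS_Rop)
  have I: "inS N (sscale c (sone N))" by (intro inS_sscale inS_sone)
  have "PB2 N \<psi> f T = 1/2 * spair N P (smult N Y T) - 1/2 * spair N P' (smult N T Y)
      + 1/2 * spair N Q (smult N Y T) - 1/2 * spair N Q' (smult N T Y)"
    unfolding PB2_def Let_def d d' Y_def P_def Q_def P'_def Q'_def F_def ..
  also have "\<dots> = 1/2 * spair N Y (smult N T (sadd P Q)) - 1/2 * spair N Y (smult N (sadd P' Q') T)"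
    using PQ Y T spair_smult_cycle[of N P Y T] spair_smult_cycle[of N Q Y T]
      spair_smult_cycle[of N Y P' T] spair_smult_cycle[of N Y Q' T]
    by (simp add: smult_sadd_left smult_sadd_right spair_sadd_right inS_smult algebra_simps)
  also have "\<dots> = 1/2 * spair N Y (smult N T (sadd (smult N (Rop E) F) (sscale c (sone N))))
      - 1/2 * spair N Y (smult N (sadd (smult N F (Rop E)) (sscale c (sone N))) T)"
    using sadd_A1op_Sop_Fmat[OF E, of \<alpha>] sadd_A2op_Sstar_Fmat[OF E, of \<alpha>]
    unfolding P_def Q_def P'_def Q'_def F_def c_def by simp
  also have "\<dots> = spair N Y (sdiff (smult N T (sscale (1/2) (smult N (Rop E) F)))
                                  (smult N (sscale (1/2) (smult N F (Rop E))) T))"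
    using RE F Y T I
    by (simp add: smult_sadd_left smult_sadd_right spair_sadd_right spair_sdiff_right
        spair_sscale_right smult_sscale_left smult_sscale_right smult_sone_left smult_sone_right
        inS_smult inS_sscale inS_sone algebra_simps)
  finally show ?thesis unfolding Y_def F_def .
qed

lemma Finv_dressing:
  fixes N :: nat and \<alpha> :: real
  defines "Fi \<equiv> Finv N \<alpha>"
  assumes T: "inS N T" and gU: "inS N gU" and gV: "inS N gV"
    and Fi_gU: "smult N Fi gU = smult N gV Fi"
    and gV_comm: "smult N gV (smult N Fi T) = smult N (smult N Fi T) gV"
  defines "E \<equiv> smult N Fi (smult N T (smult N gV Fi))"
  shows "smult N T (smult N gV Fi) = smult N (Fmat N \<alpha>) E"
    and "smult N (smult N gV Fi) T = smult N E (Fmat N \<alpha>)"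
    and "smult N Fi (smult N (smult N T Fi) gU) = E"
    and "smult N (smult N (smult N Fi T) gV) Fi = E"
proof -
  have Fi: "inS N Fi" unfolding Fi_def by (rule inS_Finv)
  show "smult N T (smult N gV Fi) = smult N (Fmat N \<alpha>) E"
    using T gV Fi by (simp add: E_def Fi_def smult_assoc inS_smult smult_Fmat_Finv_smult)
  show "smult N (smult N gV Fi) T = smult N E (Fmat N \<alpha>)"
    using T gV Fi gV_comm
    by (simp add: E_def Fi_def smult_assoc inS_smult inS_Fmat smult_Finv_Fmat smult_sone_right)
  show "smult N Fi (smult N (smult N T Fi) gU) = E"
    using T Fi gU gV Fi_gU by (simp add: E_def smult_assoc inS_smult)
  show "smult N (smult N (smult N Fi T) gV) Fi = E"
    using T Fi gV by (simp add: E_def smult_assoc inS_smult)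
qed

lemma PB2_compose_Finv:
  fixes \<alpha> :: real
  assumes grad_ex: "\<forall>L. inS N L \<longrightarrow> (\<exists>G. is_grad N (inS N) \<phi> L G)"
    and ad_inv: "\<forall>L. inS N L \<longrightarrow>
                   smult N (grad N (inS N) \<phi> L) L = smult N L (grad N (inS N) \<phi> L)"
    and psi_eq: "\<forall>T. inG N T \<longrightarrow> \<phi> (smult N T (Finv N \<alpha>)) = \<phi> (smult N (Finv N \<alpha>) T)"
    and T: "inG N T" and f: "\<exists>G. is_grad N (inG N) f T G"
  defines "Fi \<equiv> Finv N \<alpha>" and "d\<phi> \<equiv> \<lambda>Y. smult N Y (grad N (inS N) \<phi> Y)"
  shows "PB2 N (\<lambda>T'. \<phi> (smult N T' Fi)) f T = spair N (grad N (inG N) f T)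
     (sdiff (smult N T (sscale (1/2) (smult N (Rop (smult N (d\<phi> (smult N Fi T)) Fi)) (Fmat N \<alpha>))))
            (smult N (sscale (1/2) (smult N (Fmat N \<alpha>) (Rop (smult N Fi (d\<phi> (smult N T Fi)))))) T))"
proof -
  define gU gV
    where "gU = grad N (inS N) \<phi> (smult N T Fi)" and "gV = grad N (inS N) \<phi> (smult N Fi T)"
  define E where "E = smult N Fi (smult N T (smult N gV Fi))"
  have TS: "inS N T" using T by (rule inG_inS)
  have Fi: "inS N Fi" unfolding Fi_def by (rule inS_Finv)
  have gU: "inS N gU" and gV: "inS N gV"
    unfolding gU_def gV_def using grad_ex inS_smult[OF TS Fi] inS_smult[OF Fi TS]
    by (auto intro: inS_grad)
  have E: "inS N E" unfolding E_def using Fi TS gV by (intro inS_smult)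
  note grad_\<psi> = grad_compose_smult[OF Fi T grad_ex psi_eq[folded Fi_def], folded gU_def gV_def]
  have Fi_gU: "smult N Fi gU = smult N gV Fi" using grad_\<psi> by simp
  have gV_comm: "smult N gV (smult N Fi T) = smult N (smult N Fi T) gV"
    using ad_inv inS_smult[OF Fi TS] unfolding gV_def by blast
  note dressing = Finv_dressing[OF TS gU gV Fi_gU[unfolded Fi_def] gV_comm[unfolded Fi_def],
      folded Fi_def, folded E_def]
  have "PB2 N (\<lambda>T'. \<phi> (smult N T' Fi)) f T = spair N (grad N (inG N) f T)
     (sdiff (smult N T (sscale (1/2) (smult N (Rop E) (Fmat N \<alpha>))))
            (smult N (sscale (1/2) (smult N (Fmat N \<alpha>) (Rop E))) T))"
    by (rule PB2_eq_dressed[OF TS E f]) (simp_all add: grad_\<psi>(2) dressing(1,2))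
  then show ?thesis
    unfolding d\<phi>_def gU_def[symmetric] gV_def[symmetric] dressing(3,4) .
qed

theorem mainTheorem9:
  fixes N :: nat and \<alpha> :: real and \<phi> :: "ser \<Rightarrow> complex"
  assumes N2: "N \<ge> 2"
    and grad_ex: "\<forall>L. inS N L \<longrightarrow> (\<exists>G. is_grad N (inS N) \<phi> L G)"
    and ad_inv: "\<forall>L. inS N L \<longrightarrow>
                   smult N (grad N (inS N) \<phi> L) L = smult N L (grad N (inS N) \<phi> L)"
    and psi_eq: "\<forall>T. inG N T \<longrightarrow> \<phi> (smult N T (Finv N \<alpha>)) = \<phi> (smult N (Finv N \<alpha>) T)"
  shows "\<forall>T f. inG N T \<and> (\<exists>G. is_grad N (inG N) f T G) \<longrightarrow>
     (let \<psi> = (\<lambda>T'. \<phi> (smult N T' (Finv N \<alpha>)));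
          d\<phi> = (\<lambda>Y. smult N Y (grad N (inS N) \<phi> Y));
          C1 = sscale (1/2) (smult N (Fmat N \<alpha>)
                 (Rop (smult N (Finv N \<alpha>) (d\<phi> (smult N T (Finv N \<alpha>))))));
          C2 = sscale (1/2) (smult N
                 (Rop (smult N (d\<phi> (smult N (Finv N \<alpha>) T)) (Finv N \<alpha>))) (Fmat N \<alpha>))
      in PB2 N \<psi> f T = spair N (grad N (inG N) f T) (sdiff (smult N T C2) (smult N C1 T)))"
  using PB2_compose_Finv[OF grad_ex ad_inv psi_eq] by (simp add: Let_def)

end
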